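(* Let $K\subseteq\mathbb{R}^n$ be a convex set, and let $O\in\partial K$. Then $\mathrm{LCD}(O)>0$.
   Context: A point $P\in\partial K\setminus\{O\}$ is called $O$-critical if $\langle O-P, X-P\rangle\geq 0$ for all $X\in K$ (equivalently, the affine hyperplane through $P$ orthogonal to the segment $OP$ is a supporting hyperplane of $K$). The least critical distance $\mathrm{LCD}(O)$ is the infimum of $|OP|$ over all $O$-critical points $P\in\partial K$ (with the infimum of the empty set equal to $+\infty$). *)

theory Defs
  imports "HOL-Analysis.Analysis"
begin

definition critical_point :: "(real ^ 'n) set \<Rightarrow> real ^ 'n \<Rightarrow> real ^ 'n \<Rightarrow> bool" where
  "critical_point K Ob P \<longleftrightarrow>
     P \<in> frontier K \<and> P \<noteq> Ob \<and> (\<forall>X\<in>K. inner (Ob - P) (X - P) \<ge> 0)"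

text \<open>Least critical distance, valued in the extended reals (Inf of the empty set is +infinity).\<close>
definition LCD :: "(real ^ 'n) set \<Rightarrow> real ^ 'n \<Rightarrow> ereal" where
  "LCD K Ob = Inf ((\<lambda>P. ereal (dist Ob P)) ` {P. critical_point K Ob P})"

end

theory Submission
  imports Defs
begin

text \<open>If Q is a critical point and P any point of the closure of K with |OQ| \<le> |OP|/2, then
  testing the supporting half-space at Q against the point of the segment OP at distance
  2|OQ| from O shows that the angle QOP is at least 60 degrees.  Hence critical points
  accumulating at O would give infinitely many unit directions pairwise at distance \<ge> 1,
  which is impossible on the compact unit sphere.\<close>

lemma inner_nonneg_on_closure:
  fixes a Q :: "'a::real_inner"
  assumes "\<forall>X\<in>K. 0 \<le> inner a (X - Q)" and "X \<in> closure K"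
  shows "0 \<le> inner a (X - Q)"
proof -
  have "closed {X. 0 \<le> inner a (X - Q)}"
    by (intro closed_Collect_le continuous_intros)
  moreover have "K \<subseteq> {X. 0 \<le> inner a (X - Q)}"
    using assms(1) by auto
  ultimately show ?thesis
    using assms(2) closure_minimal by blast
qed

lemma supporting_point_inner_le:
  fixes Ob P Q :: "'a::real_inner"
  assumes "convex K" and "Ob \<in> closure K" and "P \<in> closure K"
    and supp: "\<forall>X\<in>K. 0 \<le> inner (Ob - Q) (X - Q)"
    and "Q \<noteq> Ob" and le: "2 * dist Ob Q \<le> dist Ob P"
  shows "inner (Q - Ob) (P - Ob) \<le> dist Ob Q * dist Ob P / 2"
proof -
  define dP dQ where "dP = dist Ob P" and "dQ = dist Ob Q"
  have "dQ > 0" using \<open>Q \<noteq> Ob\<close> by (simp add: dQ_def)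
  with le have "dP > 0" unfolding dP_def dQ_def by linarith
  define t where "t = 2 * dQ / dP"
  have "0 \<le> t" "t \<le> 1"
    using \<open>dQ > 0\<close> \<open>dP > 0\<close> le by (auto simp: t_def dP_def dQ_def)
  then have "(1 - t) *\<^sub>R Ob + t *\<^sub>R P \<in> closure K"
    using convex_closure[OF \<open>convex K\<close>] assms(2,3) by (simp add: convex_alt)
  then have "Ob + t *\<^sub>R (P - Ob) \<in> closure K"
    by (simp add: algebra_simps)
  then have "0 \<le> inner (Ob - Q) (Ob + t *\<^sub>R (P - Ob) - Q)"
    by (rule inner_nonneg_on_closure[OF supp])
  also have "\<dots> = dQ\<^sup>2 - t * inner (Q - Ob) (P - Ob)"
    by (simp add: dQ_def dist_norm power2_norm_eq_inner algebra_simps inner_commute)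
  finally have "t * inner (Q - Ob) (P - Ob) \<le> dQ\<^sup>2" by simp
  with \<open>dP > 0\<close> \<open>dQ > 0\<close> show ?thesis
    by (simp add: t_def dP_def[symmetric] dQ_def[symmetric] field_simps power2_eq_square)
qed

lemma dist_sgn_ge_1_if_inner_le_half:
  fixes a b :: "'a::real_inner"
  assumes "a \<noteq> 0" and "b \<noteq> 0" and "inner a b \<le> norm a * norm b / 2"
  shows "1 \<le> dist (sgn a) (sgn b)"
proof -
  have "inner (sgn a) (sgn b) = inner a b / (norm a * norm b)"
    by (simp add: sgn_div_norm divide_inverse_commute)
  also have "\<dots> \<le> 1 / 2"
    using assms by (simp add: divide_le_eq mult_ac)
  finally have "inner (sgn a) (sgn b) \<le> 1 / 2" .
  moreover have "(dist (sgn a) (sgn b))\<^sup>2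
      = inner (sgn a) (sgn a) + inner (sgn b) (sgn b) - 2 * inner (sgn a) (sgn b)"
    by (simp add: dist_norm power2_norm_eq_inner inner_diff_left inner_diff_right inner_commute)
  moreover have "inner (sgn x) (sgn x) = 1" if "x \<noteq> 0" for x :: 'a
    using that by (simp flip: power2_norm_eq_inner add: norm_sgn)
  ultimately have "1\<^sup>2 \<le> (dist (sgn a) (sgn b))\<^sup>2" using assms(1,2) by simp
  then show ?thesis by (rule power2_le_imp_le) simp
qed

lemma critical_point_directions_separated:
  fixes K :: "(real ^ 'n) set"
  assumes "convex K" and "Ob \<in> closure K"
    and "critical_point K Ob P" and "critical_point K Ob Q"
    and "2 * dist Ob Q \<le> dist Ob P"
  shows "1 \<le> dist (sgn (Q - Ob)) (sgn (P - Ob))"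
proof (rule dist_sgn_ge_1_if_inner_le_half)
  have "P \<in> closure K" "\<forall>X\<in>K. 0 \<le> inner (Ob - Q) (X - Q)" "Q \<noteq> Ob"
    using assms(3,4) by (auto simp: critical_point_def frontier_def)
  with assms supporting_point_inner_le
  show "inner (Q - Ob) (P - Ob) \<le> norm (Q - Ob) * norm (P - Ob) / 2"
    by (metis dist_commute dist_norm)
  show "Q - Ob \<noteq> 0" "P - Ob \<noteq> 0"
    using assms(4,5) by (auto simp: critical_point_def)
qed

lemma compact_sequence_obtains_close_terms:
  fixes u :: "nat \<Rightarrow> 'a::metric_space"
  assumes "compact S" and "\<And>n. u n \<in> S" and "0 < e"
  obtains m n where "m < n" and "dist (u m) (u n) < e"
proof -
  obtain l r where "strict_mono r" and "(u \<circ> r) \<longlonglongrightarrow> l"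
    using compact_imp_seq_compact[OF assms(1)] assms(2) unfolding seq_compact_def by meson
  then obtain M where "\<And>m n. M \<le> m \<Longrightarrow> M \<le> n \<Longrightarrow> dist ((u \<circ> r) m) ((u \<circ> r) n) < e"
    using LIMSEQ_imp_Cauchy metric_CauchyD assms(3) by metis
  then have "dist (u (r M)) (u (r (Suc M))) < e" by simp
  moreover have "r M < r (Suc M)" using \<open>strict_mono r\<close> by (simp add: strict_mono_def)
  ultimately show ?thesis using that by blast
qed

lemma halving_sequence:
  fixes d :: "'a \<Rightarrow> real"
  assumes "A x\<^sub>0" and pos: "\<And>x. A x \<Longrightarrow> 0 < d x"
    and small: "\<And>e. 0 < e \<Longrightarrow> \<exists>x. A x \<and> d x < e"
  obtains f :: "nat \<Rightarrow> 'a" where "\<And>n. A (f n)" and "\<And>m n. m < n \<Longrightarrow> 2 * d (f n) \<le> d (f m)"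
proof -
  obtain f where f: "\<And>n. A (f n)" and step: "\<And>n. 2 * d (f (Suc n)) < d (f n)"
  proof -
    have "\<exists>f. \<forall>n. A (f n) \<and> 2 * d (f (Suc n)) < d (f n)"
    proof (rule dependent_nat_choice)
      fix x assume "A x"
      then show "\<exists>y. A y \<and> 2 * d y < d x"
        using small[of "d x / 2"] pos by fastforce
    qed (use \<open>A x\<^sub>0\<close> in blast)
    then show ?thesis using that by blast
  qed
  have "decseq (\<lambda>n. d (f n))"
  proof (rule decseq_SucI)
    show "d (f (Suc n)) \<le> d (f n)" for n
      using step[of n] pos[OF f[of "Suc n"]] by linarith
  qed
  have halving: "2 * d (f n) \<le> d (f m)" if "m < n" for m n
  proof -
    have "d (f n) \<le> d (f (Suc m))"
      using decseqD[OF \<open>decseq (\<lambda>n. d (f n))\<close>] that by simp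
    with step[of m] show ?thesis by linarith
  qed
  show ?thesis by (rule that[OF f halving])
qed

lemma LCD_gt_zeroI:
  assumes "0 < e" and "\<And>P. critical_point K Ob P \<Longrightarrow> e \<le> dist Ob P"
  shows "0 < LCD K Ob"
proof -
  have "0 < ereal e" using assms(1) by simp
  also have "\<dots> \<le> LCD K Ob"
    unfolding LCD_def using assms(2) by (auto intro: Inf_greatest)
  finally show ?thesis .
qed

theorem mainTheorem2:
  fixes K :: "(real ^ 'n) set" and Ob :: "real ^ 'n"
  assumes "convex K" and "Ob \<in> frontier K"
  shows "LCD K Ob > 0"
proof (rule ccontr)
  assume "\<not> LCD K Ob > 0"
  then have near: "\<exists>P. critical_point K Ob P \<and> dist Ob P < e" if "0 < e" for e
    using LCD_gt_zeroI that by (meson not_le)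
  then obtain P\<^sub>0 where "critical_point K Ob P\<^sub>0" using zero_less_one by blast
  moreover have "0 < dist Ob P" if "critical_point K Ob P" for P
    using that by (auto simp: critical_point_def)
  ultimately obtain f :: "nat \<Rightarrow> real ^ 'n" where crit: "\<And>n. critical_point K Ob (f n)"
    and halving: "\<And>m n. m < n \<Longrightarrow> 2 * dist Ob (f n) \<le> dist Ob (f m)"
    using halving_sequence[where A = "critical_point K Ob" and d = "dist Ob"] near by blast
  have "Ob \<in> closure K"
    using assms(2) by (simp add: frontier_def)
  then have separated: "1 \<le> dist (sgn (f m - Ob)) (sgn (f n - Ob))" if "m < n" for m n
    using critical_point_directions_separated[OF assms(1) _ crit crit halving[OF that]]
    by (simp add: dist_commute)
  have on_sphere: "sgn (f n - Ob) \<in> sphere 0 1" for n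
    using crit[of n] by (auto simp: critical_point_def norm_sgn)
  obtain m n where "m < n" and "dist (sgn (f m - Ob)) (sgn (f n - Ob)) < 1"
    using compact_sequence_obtains_close_terms[OF compact_sphere on_sphere zero_less_one] .
  with separated show False by (meson not_le)
qed

end
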